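(* Let $\mathbf{k}$ be a commutative unital ring and $R$ a $\mathbf{k}$-algebra. Let $P_1,P_2:R\to R$ be extended Rota-Baxter operators of weights $(\lambda_1,\kappa_1)$ and $(\lambda_2,\kappa_2)$ respectively. Suppose there are $\alpha_{ij},\beta_{ij},\gamma_{ij}\in\mathbf{k}$ for $(i,j)\in\{(1,2),(2,1)\}$ such that for $1\le i\neq j\le 2$ and all $u,v\in R$, $$P_i(u)P_j(v)=P_i(uP_j(v))+P_j(P_i(u)v)+\alpha_{ij}P_i(uv)+\beta_{ij}P_j(uv)+\gamma_{ij}uv.$$ If $\beta_{12}+\alpha_{21}=\lambda_1$ and $\alpha_{12}+\beta_{21}=\lambda_2$, then for all $a,b\in\mathbf{k}$ the operator $Q:=aP_1+bP_2$ is an extended Rota-Baxter operator of weight $\big(a\lambda_1+b\lambda_2,\ a^2\kappa_1+b^2\kappa_2+ab(\gamma_{12}+\gamma_{21})\big)$.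
   Context: For $\lambda,\kappa\in\mathbf{k}$, an extended Rota-Baxter operator of weight $(\lambda,\kappa)$ on a $\mathbf{k}$-algebra $R$ is a $\mathbf{k}$-linear map $P:R\to R$ such that $P(x)P(y)=P(xP(y))+P(P(x)y)+\lambda P(xy)+\kappa xy$ for all $x,y\in R$. *)

theory Defs
  imports Main
begin

definition is_algebra :: "('k::comm_ring_1 \<Rightarrow> 'r::ring \<Rightarrow> 'r) \<Rightarrow> bool" where
  "is_algebra sm \<longleftrightarrow>
     (\<forall>c x y. sm c (x + y) = sm c x + sm c y) \<and>
     (\<forall>c d x. sm (c + d) x = sm c x + sm d x) \<and>
     (\<forall>c d x. sm (c * d) x = sm c (sm d x)) \<and>
     (\<forall>x. sm 1 x = x) \<and>
     (\<forall>c x y. sm c (x * y) = sm c x * y) \<and>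
     (\<forall>c x y. sm c (x * y) = x * sm c y)"

definition k_linear :: "('k::comm_ring_1 \<Rightarrow> 'r::ring \<Rightarrow> 'r) \<Rightarrow> ('r \<Rightarrow> 'r) \<Rightarrow> bool" where
  "k_linear sm P \<longleftrightarrow> (\<forall>x y. P (x + y) = P x + P y) \<and> (\<forall>c x. P (sm c x) = sm c (P x))"

definition ext_RB :: "('k::comm_ring_1 \<Rightarrow> 'r::ring \<Rightarrow> 'r) \<Rightarrow> 'k \<Rightarrow> 'k \<Rightarrow> ('r \<Rightarrow> 'r) \<Rightarrow> bool" where
  "ext_RB sm lam kap P \<longleftrightarrow> k_linear sm P \<and>
     (\<forall>x y. P x * P y = P (x * P y) + P (P x * y) + sm lam (P (x * y)) + sm kap (x * y))"

end

theory Submission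
  imports Defs
begin

text \<open>Expanding \<open>Q x * Q y\<close> bilinearly gives \<open>a\<^sup>2 P\<^sub>1 x P\<^sub>1 y + b\<^sup>2 P\<^sub>2 x P\<^sub>2 y + a b (P\<^sub>1 x P\<^sub>2 y + P\<^sub>2 x P\<^sub>1 y)\<close>.
  The pure terms are rewritten by the Rota-Baxter identities of \<open>P\<^sub>1\<close> and \<open>P\<^sub>2\<close>, the mixed
  term by the two compatibility identities. In the mixed term the coefficients of \<open>P\<^sub>1 (u v)\<close>
  and \<open>P\<^sub>2 (u v)\<close> add up to \<open>\<beta>\<^sub>1\<^sub>2 + \<alpha>\<^sub>2\<^sub>1 = \<lambda>\<^sub>1\<close> and \<open>\<alpha>\<^sub>1\<^sub>2 + \<beta>\<^sub>2\<^sub>1 = \<lambda>\<^sub>2\<close>, exactly what is needed to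
  recombine everything into the Rota-Baxter identity of \<open>Q\<close> of the stated weight.\<close>

lemma
  assumes "is_algebra sm"
  shows is_algebra_scale_add: "sm c (x + y) = sm c x + sm c y"
    and is_algebra_add_scale: "sm (c + d) x = sm c x + sm d x"
    and is_algebra_scale_scale: "sm c (sm d x) = sm (c * d) x"
    and is_algebra_scale_mult_left: "sm c x * y = sm c (x * y)"
    and is_algebra_scale_mult_right: "x * sm c y = sm c (x * y)"
  using assms unfolding is_algebra_def by metis+

lemma is_algebra_scale_mult_scale:
  assumes "is_algebra sm"
  shows "sm c x * sm d y = sm (c * d) (x * y)"
  by (simp add: assms is_algebra_scale_mult_left is_algebra_scale_mult_right
      is_algebra_scale_scale mult.commute)

lemma
  assumes "k_linear sm P"
  shows k_linear_add: "P (x + y) = P x + P y"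
    and k_linear_scale: "P (sm c x) = sm c (P x)"
  using assms unfolding k_linear_def by blast+

lemma
  assumes "ext_RB sm lam kap P"
  shows ext_RB_k_linear: "k_linear sm P"
    and ext_RB_identity:
      "P x * P y = P (x * P y) + P (P x * y) + sm lam (P (x * y)) + sm kap (x * y)"
  using assms unfolding ext_RB_def by blast+

lemma k_linear_lincomb:
  assumes "is_algebra sm" and "k_linear sm P1" and "k_linear sm P2"
  shows "k_linear sm (\<lambda>x. sm a (P1 x) + sm b (P2 x))"
  unfolding k_linear_def
proof (intro conjI allI)
  fix x y
  show "sm a (P1 (x + y)) + sm b (P2 (x + y)) = sm a (P1 x) + sm b (P2 x) + (sm a (P1 y) + sm b (P2 y))"
    by (simp add: k_linear_add[OF assms(2)] k_linear_add[OF assms(3)]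
        is_algebra_scale_add[OF assms(1)] add_ac)
next
  fix c x
  show "sm a (P1 (sm c x)) + sm b (P2 (sm c x)) = sm c (sm a (P1 x) + sm b (P2 x))"
    by (simp add: k_linear_scale[OF assms(2)] k_linear_scale[OF assms(3)]
        is_algebra_scale_add[OF assms(1)] is_algebra_scale_scale[OF assms(1)] mult.commute)
qed

lemma lincomb_mult_lincomb:
  assumes "is_algebra sm"
  shows "(sm a u1 + sm b u2) * (sm a v1 + sm b v2)
       = sm (a\<^sup>2) (u1 * v1) + sm (b\<^sup>2) (u2 * v2) + sm (a * b) (u1 * v2 + u2 * v1)"
  by (simp add: assms ring_distribs is_algebra_scale_mult_scale is_algebra_scale_add
      power2_eq_square mult.commute add_ac)

lemma mixed_products_sum:
  assumes alg: "is_algebra sm"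
    and c12: "\<And>u v. P1 u * P2 v = P1 (u * P2 v) + P2 (P1 u * v)
                 + sm \<alpha>12 (P1 (u * v)) + sm \<beta>12 (P2 (u * v)) + sm \<gamma>12 (u * v)"
    and c21: "\<And>u v. P2 u * P1 v = P2 (u * P1 v) + P1 (P2 u * v)
                 + sm \<alpha>21 (P2 (u * v)) + sm \<beta>21 (P1 (u * v)) + sm \<gamma>21 (u * v)"
  shows "P1 x * P2 y + P2 x * P1 y
       = P1 (x * P2 y) + P2 (x * P1 y) + P2 (P1 x * y) + P1 (P2 x * y)
         + sm (\<alpha>12 + \<beta>21) (P1 (x * y)) + sm (\<beta>12 + \<alpha>21) (P2 (x * y))
         + sm (\<gamma>12 + \<gamma>21) (x * y)"
  by (simp add: c12 c21 alg is_algebra_add_scale add_ac)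

lemma lincomb_rota_baxter_rhs:
  fixes sm :: "'k::comm_ring_1 \<Rightarrow> 'r::ring \<Rightarrow> 'r" and a b :: 'k and P1 P2 :: "'r \<Rightarrow> 'r"
  assumes alg: "is_algebra sm" and lin1: "k_linear sm P1" and lin2: "k_linear sm P2"
  defines "Q \<equiv> \<lambda>x. sm a (P1 x) + sm b (P2 x)"
  shows "Q (x * Q y) + Q (Q x * y) + sm (a * lam1 + b * lam2) (Q (x * y))
           + sm (a\<^sup>2 * kap1 + b\<^sup>2 * kap2 + a * b * \<gamma>) (x * y)
       = sm (a\<^sup>2) (P1 (x * P1 y) + P1 (P1 x * y) + sm lam1 (P1 (x * y)) + sm kap1 (x * y))
         + sm (b\<^sup>2) (P2 (x * P2 y) + P2 (P2 x * y) + sm lam2 (P2 (x * y)) + sm kap2 (x * y))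
         + sm (a * b) (P1 (x * P2 y) + P2 (x * P1 y) + P2 (P1 x * y) + P1 (P2 x * y)
           + sm lam2 (P1 (x * y)) + sm lam1 (P2 (x * y)) + sm \<gamma> (x * y))"
  unfolding Q_def
  by (simp add: k_linear_add[OF lin1] k_linear_add[OF lin2] k_linear_scale[OF lin1]
      k_linear_scale[OF lin2] is_algebra_scale_add[OF alg] is_algebra_add_scale[OF alg]
      is_algebra_scale_scale[OF alg] is_algebra_scale_mult_left[OF alg]
      is_algebra_scale_mult_right[OF alg] ring_distribs power2_eq_square mult_ac add_ac)

theorem theorem2p4:
  fixes sm :: "'k::comm_ring_1 \<Rightarrow> 'r::ring \<Rightarrow> 'r"
    and P1 P2 :: "'r \<Rightarrow> 'r"
    and lam1 kap1 lam2 kap2 \<alpha>12 \<beta>12 \<gamma>12 \<alpha>21 \<beta>21 \<gamma>21 a b :: 'k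
  assumes alg: "is_algebra sm"
    and P1: "ext_RB sm lam1 kap1 P1"
    and P2: "ext_RB sm lam2 kap2 P2"
    and c12: "\<And>u v. P1 u * P2 v = P1 (u * P2 v) + P2 (P1 u * v)
                 + sm \<alpha>12 (P1 (u * v)) + sm \<beta>12 (P2 (u * v)) + sm \<gamma>12 (u * v)"
    and c21: "\<And>u v. P2 u * P1 v = P2 (u * P1 v) + P1 (P2 u * v)
                 + sm \<alpha>21 (P2 (u * v)) + sm \<beta>21 (P1 (u * v)) + sm \<gamma>21 (u * v)"
    and h1: "\<beta>12 + \<alpha>21 = lam1"
    and h2: "\<alpha>12 + \<beta>21 = lam2"
  shows "ext_RB sm (a * lam1 + b * lam2) (a^2 * kap1 + b^2 * kap2 + a * b * (\<gamma>12 + \<gamma>21))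
           (\<lambda>x. sm a (P1 x) + sm b (P2 x))"
proof -
  define Q where "Q = (\<lambda>x. sm a (P1 x) + sm b (P2 x))"
  have lin1: "k_linear sm P1" using P1 by (rule ext_RB_k_linear)
  have lin2: "k_linear sm P2" using P2 by (rule ext_RB_k_linear)
  have "k_linear sm Q"
    unfolding Q_def using alg lin1 lin2 by (rule k_linear_lincomb)
  moreover have "Q x * Q y = Q (x * Q y) + Q (Q x * y) + sm (a * lam1 + b * lam2) (Q (x * y))
      + sm (a\<^sup>2 * kap1 + b\<^sup>2 * kap2 + a * b * (\<gamma>12 + \<gamma>21)) (x * y)" for x y
    unfolding Q_def lincomb_rota_baxter_rhs[OF alg lin1 lin2] lincomb_mult_lincomb[OF alg]
      ext_RB_identity[OF P1] ext_RB_identity[OF P2] mixed_products_sum[OF alg c12 c21] h1 h2 ..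
  ultimately show ?thesis
    unfolding ext_RB_def Q_def[symmetric] by blast
qed

end
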